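(* Let $F_1,\dots,F_n$ be distributions of independent nonnegative random variables $v_1,\dots,v_n$ with finite expectations, and let $\phi=\frac{1+\sqrt5}{2}$ be the golden ratio. Let $\textsf{ALG}$ be the order-unaware algorithm defined in the context below. Then for every arrival order $\pi$ of the $n$ boxes, $$\textsf{ALG}(\pi)\ \ge\ \frac{1}{\phi}\,\textsf{OPT}(\pi),$$ where $\textsf{ALG}(\pi)$ and $\textsf{OPT}(\pi)$ denote the expected value accepted by $\textsf{ALG}$ and by the best order-aware online algorithm, respectively, when the boxes arrive in order $\pi$.
   Context: Setting (prophet inequality, max-expectation objective): there are $n$ boxes; box $i$ contains a value $v_i\sim F_i$, independently across boxes, and the distributions are known in advance. Boxes arrive one at a time in an arrival order $\pi$; when a box arrives, its identity and realized value are revealed and an online algorithm must immediately and irrevocably either accept it (and stop, receiving its value) or reject it forever. If no box is accepted the algorithm receives $0$. An order-aware algorithm knows $\pi$ in advance; an order-unaware algorithm's decision at each step may depend only on the distributions, and the identities and realized values of the boxes that have arrived so far (not on the order of the remaining boxes). $\textsf{OPT}(\pi)$ is the maximum expected accepted value over all order-aware online algorithms for order $\pi$. The algorithm $\textsf{ALG}$: relabel boxes so that they arrive in order $1,2,\dots,n$. For step $t$, let $y_t=\max_{s>t} v_s$ (the maximum over boxes not yet arrived; $y_n=0$). Define $\alpha_t=\frac1\phi\mathbb{E}[y_t]$ and let $\beta_t$ be the unique $x\ge 0$ solving $\mathbb{E}[(y_t-\phi x)^+]=x$ (so $\alpha_n=\beta_n=0$). $\textsf{ALG}$ accepts box $t$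 (if it has not stopped yet) if and only if its realized value $\theta_t$ satisfies $\theta_t\ge \tau_t:=\max(\alpha_t,\beta_t)$. Note $\alpha_t,\beta_t$ depend only on the set of remaining boxes, so $\textsf{ALG}$ is order-unaware. *)

theory Defs
  imports "HOL-Probability.Probability"
begin

definition golden :: real where
  "golden = (1 + sqrt 5) / 2"

definition arrival_space :: "nat \<Rightarrow> (nat \<Rightarrow> real measure) \<Rightarrow> (nat \<Rightarrow> nat) \<Rightarrow> (nat \<Rightarrow> real) measure" where
  "arrival_space n F \<pi> = PiM {..<n} (\<lambda>t. F (\<pi> t))"

definition online_rule :: "nat \<Rightarrow> (nat \<Rightarrow> real) measure \<Rightarrow> (nat \<Rightarrow> (nat \<Rightarrow> real) \<Rightarrow> bool) \<Rightarrow> bool" where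
  "online_rule n \<Omega> s \<longleftrightarrow>
     (\<forall>t<n. (\<forall>\<omega> \<omega>'. (\<forall>i\<le>t. \<omega> i = \<omega>' i) \<longrightarrow> s t \<omega> = s t \<omega>')
           \<and> {\<omega> \<in> space \<Omega>. s t \<omega>} \<in> sets \<Omega>)"

definition stop_value :: "nat \<Rightarrow> (nat \<Rightarrow> (nat \<Rightarrow> real) \<Rightarrow> bool) \<Rightarrow> (nat \<Rightarrow> real) \<Rightarrow> real" where
  "stop_value n s \<omega> = (if \<exists>t<n. s t \<omega> then \<omega> (LEAST t. s t \<omega>) else 0)"

definition expected_value :: "nat \<Rightarrow> (nat \<Rightarrow> real) measure \<Rightarrow> (nat \<Rightarrow> (nat \<Rightarrow> real) \<Rightarrow> bool) \<Rightarrow> ennreal" where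
  "expected_value n \<Omega> s = (\<integral>\<^sup>+ \<omega>. ennreal (stop_value n s \<omega>) \<partial>\<Omega>)"

definition OPT :: "nat \<Rightarrow> (nat \<Rightarrow> real measure) \<Rightarrow> (nat \<Rightarrow> nat) \<Rightarrow> ennreal" where
  "OPT n F \<pi> = (SUP s \<in> {s. online_rule n (arrival_space n F \<pi>) s}.
                   expected_value n (arrival_space n F \<pi>) s)"

definition y_future :: "nat \<Rightarrow> nat \<Rightarrow> (nat \<Rightarrow> real) \<Rightarrow> real" where
  "y_future n t \<omega> = Max (insert 0 (\<omega> ` {Suc t..<n}))"

definition alpha_thr :: "nat \<Rightarrow> (nat \<Rightarrow> real measure) \<Rightarrow> (nat \<Rightarrow> nat) \<Rightarrow> nat \<Rightarrow> real" where
  "alpha_thr n F \<pi> t = (1 / golden) * (\<integral>\<omega>. y_future n t \<omega> \<partial>(arrival_space n F \<pi>))"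

definition beta_thr :: "nat \<Rightarrow> (nat \<Rightarrow> real measure) \<Rightarrow> (nat \<Rightarrow> nat) \<Rightarrow> nat \<Rightarrow> real" where
  "beta_thr n F \<pi> t = (THE x. x \<ge> 0 \<and>
      (\<integral>\<omega>. max 0 (y_future n t \<omega> - golden * x) \<partial>(arrival_space n F \<pi>)) = x)"

definition ALG_rule :: "nat \<Rightarrow> (nat \<Rightarrow> real measure) \<Rightarrow> (nat \<Rightarrow> nat) \<Rightarrow> nat \<Rightarrow> (nat \<Rightarrow> real) \<Rightarrow> bool" where
  "ALG_rule n F \<pi> t \<omega> = (\<omega> t \<ge> max (alpha_thr n F \<pi> t) (beta_thr n F \<pi> t))"

definition ALG :: "nat \<Rightarrow> (nat \<Rightarrow> real measure) \<Rightarrow> (nat \<Rightarrow> nat) \<Rightarrow> ennreal" where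
  "ALG n F \<pi> = expected_value n (arrival_space n F \<pi>) (ALG_rule n F \<pi>)"

end

theory Submission
  imports Defs
begin

text \<open>The analysis runs backwards over the arrival order. Let \<open>V t\<close> be the best online value
  from step \<open>t\<close> on and \<open>G t\<close> that of ALG. Then \<open>V t = E max (v t) (V (t+1))\<close> (Bellman),
  \<open>V (t+1) \<le> E y t\<close> (no online rule beats the prophet), and
  \<open>G t = E (if v t \<ge> \<tau> t then v t else G (t+1))\<close>. The fixed point \<open>\<beta> t\<close> of
  \<open>x \<mapsto> E (y t - \<phi> x)\<^sup>+\<close> satisfies \<open>E y t \<le> \<phi>\<^sup>2 \<beta> t\<close>, hence \<open>\<tau> t \<le> \<phi> \<beta> t\<close>; splitting the excess
  of \<open>y t = max (v (t+1)) (y (t+1))\<close> into the excesses of its two parts gives \<open>\<beta> t \<le> G (t+1)\<close>.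
  A case split on \<open>v t \<ge> \<tau> t\<close> then bounds \<open>max (v t) (V (t+1))\<close> by \<open>\<phi>\<close> times ALG's payoff at
  step \<open>t\<close>, so \<open>V t \<le> \<phi> G t\<close> by backward induction; finally \<open>OPT \<le> V 0\<close> and \<open>ALG = G 0\<close>.\<close>

lemma golden_pos: "0 < golden"
  unfolding golden_def by (simp add: add_pos_nonneg)

lemma golden_ge_1: "1 \<le> golden"
  unfolding golden_def by simp

lemma golden_square: "golden * golden = golden + 1"
  unfolding golden_def by (simp add: field_simps)

lemma ennreal_max: "ennreal (max a b) = max (ennreal a) (ennreal b)"
  by (rule max_of_mono[symmetric]) (simp add: mono_def ennreal_leI)

section \<open>Expected excess over a level\<close>

definition expected_excess :: "'a measure \<Rightarrow> ('a \<Rightarrow> real) \<Rightarrow> real \<Rightarrow> real" where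
  "expected_excess Q Y a = (\<integral>w. max 0 (Y w - a) \<partial>Q)"

context prob_space
begin

lemma integrable_excess:
  fixes Y :: "'a \<Rightarrow> real"
  shows "integrable M Y \<Longrightarrow> integrable M (\<lambda>w. max 0 (Y w - a))"
  by auto

lemma expected_excess_antimono:
  assumes "integrable M Y" and "a \<le> b"
  shows "expected_excess M Y b \<le> expected_excess M Y a"
  unfolding expected_excess_def using assms by (intro integral_mono integrable_excess) auto

lemma expected_excess_lipschitz:
  assumes "integrable M Y"
  shows "1-lipschitz_on UNIV (expected_excess M Y)"
proof (rule lipschitz_onI)
  fix a b :: real
  have int: "integrable M (\<lambda>w. max 0 (Y w - a) - max 0 (Y w - b))"
    using assms by (intro Bochner_Integration.integrable_diff integrable_excess)
  have "dist (expected_excess M Y a) (expected_excess M Y b)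
      = norm (\<integral>w. max 0 (Y w - a) - max 0 (Y w - b) \<partial>M)"
    unfolding expected_excess_def dist_real_def using assms by (simp add: integrable_excess)
  also have "\<dots> \<le> (\<integral>w. norm (max 0 (Y w - a) - max 0 (Y w - b)) \<partial>M)"
    by (rule integral_norm_bound)
  also have "\<dots> \<le> (\<integral>w. dist a b \<partial>M)"
    using int by (intro integral_mono integrable_norm) (auto simp: dist_real_def max_def)
  finally show "dist (expected_excess M Y a) (expected_excess M Y b) \<le> 1 * dist a b"
    by (simp add: prob_space)
qed simp

lemma expected_excess_ge:
  assumes "integrable M Y"
  shows "expectation Y - a \<le> expected_excess M Y a"
proof -
  have "expectation Y - a = (\<integral>w. Y w - a \<partial>M)"
    using assms by (simp add: prob_space)
  also have "\<dots> \<le> expected_excess M Y a"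
    unfolding expected_excess_def using assms by (intro integral_mono integrable_excess) auto
  finally show ?thesis .
qed

lemma expected_excess_max_le:
  assumes "integrable M U" and "integrable M W"
  shows "expected_excess M (\<lambda>w. max (U w) (W w)) a \<le> expected_excess M U a + expected_excess M W a"
proof -
  have "expected_excess M (\<lambda>w. max (U w) (W w)) a
      \<le> (\<integral>w. max 0 (U w - a) + max 0 (W w - a) \<partial>M)"
    unfolding expected_excess_def using assms
    by (intro integral_mono Bochner_Integration.integrable_add integrable_excess integrable_max)
       (auto simp: max_def)
  also have "\<dots> = expected_excess M U a + expected_excess M W a"
    unfolding expected_excess_def using assms by (intro Bochner_Integration.integral_add integrable_excess)
  finally show ?thesis .
qed

lemma expected_excess_fixpoint_le:
  assumes Y: "integrable M Y" and c: "0 \<le> c"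
    and x: "expected_excess M Y (c * x) = x" and z: "expected_excess M Y (c * z) \<le> z"
  shows "x \<le> z"
proof (rule ccontr)
  assume "\<not> x \<le> z"
  then have "expected_excess M Y (c * x) \<le> expected_excess M Y (c * z)"
    using c by (intro expected_excess_antimono[OF Y] mult_left_mono) auto
  with x z \<open>\<not> x \<le> z\<close> show False by linarith
qed

lemma ex1_expected_excess_fixpoint:
  assumes Y: "integrable M Y" and Y_nonneg: "\<And>w. 0 \<le> Y w" and c: "0 \<le> c"
  shows "\<exists>!x. 0 \<le> x \<and> expected_excess M Y (c * x) = x"
proof -
  define f where "f x = expected_excess M Y (c * x) - x" for x
  define E where "E = expectation Y"
  have "0 \<le> E"
    unfolding E_def using Y_nonneg by simp
  have "continuous_on UNIV (expected_excess M Y)"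
    by (rule lipschitz_on_continuous_on[OF expected_excess_lipschitz[OF Y]])
  then have "continuous_on {0..E} (\<lambda>x. expected_excess M Y (c * x))"
    using continuous_on_mult_left[OF continuous_on_id, of "{0..E}" c]
    by (rule continuous_on_compose2) simp
  then have "continuous_on {0..E} f"
    unfolding f_def by (intro continuous_intros)
  moreover have "f 0 = E"
    unfolding f_def expected_excess_def E_def using Y_nonneg by (simp add: max_def)
  moreover have "f E \<le> 0"
  proof -
    have "expected_excess M Y (c * E) \<le> E"
      unfolding expected_excess_def E_def using Y \<open>0 \<le> E\<close> c Y_nonneg
      by (intro integral_mono integrable_excess) (auto simp: E_def)
    then show ?thesis
      unfolding f_def by simp
  qed
  ultimately obtain x where "0 \<le> x" "f x = 0"
    using IVT2'[of f E 0 0] \<open>0 \<le> E\<close> by auto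
  then have x: "0 \<le> x \<and> expected_excess M Y (c * x) = x"
    unfolding f_def by simp
  show ?thesis
  proof (rule ex1I)
    show "0 \<le> x \<and> expected_excess M Y (c * x) = x"
      by (fact x)
    fix z assume "0 \<le> z \<and> expected_excess M Y (c * z) = z"
    then show "z = x"
      using x expected_excess_fixpoint_le[OF Y c, of x z] expected_excess_fixpoint_le[OF Y c, of z x] by simp
  qed
qed

end

section \<open>Stopping rules and the future maximum\<close>

definition stop_value_from :: "nat \<Rightarrow> (nat \<Rightarrow> (nat \<Rightarrow> real) \<Rightarrow> bool) \<Rightarrow> nat \<Rightarrow> (nat \<Rightarrow> real) \<Rightarrow> real" where
  "stop_value_from n s t w =
     (if \<exists>t'. t \<le> t' \<and> t' < n \<and> s t' w then w (LEAST t'. t \<le> t' \<and> s t' w) else 0)"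

lemma stop_value_from_beyond: "n \<le> t \<Longrightarrow> stop_value_from n s t w = 0"
  unfolding stop_value_from_def by auto

lemma stop_value_eq_stop_value_from: "stop_value n s w = stop_value_from n s 0 w"
  unfolding stop_value_def stop_value_from_def by auto

lemma stop_value_from_step:
  assumes "t < n"
  shows "stop_value_from n s t w = (if s t w then w t else stop_value_from n s (Suc t) w)"
proof (cases "s t w")
  case True
  then have "(LEAST t'. t \<le> t' \<and> s t' w) = t"
    by (intro Least_equality) auto
  with True assms show ?thesis unfolding stop_value_from_def by auto
next
  case False
  then have least: "(\<lambda>t'. t \<le> t' \<and> s t' w) = (\<lambda>t'. Suc t \<le> t' \<and> s t' w)"
    by (auto simp: le_less Suc_le_eq)
  from False have ex:
    "(\<exists>t'. t \<le> t' \<and> t' < n \<and> s t' w) \<longleftrightarrow> (\<exists>t'. Suc t \<le> t' \<and> t' < n \<and> s t' w)"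
    by (metis Suc_leD le_antisym not_less_eq_eq)
  show ?thesis
    using False unfolding stop_value_from_def least ex by simp
qed

lemma stop_value_from_cong:
  assumes "\<And>t'. t \<le> t' \<Longrightarrow> t' < n \<Longrightarrow> w t' = w' t' \<and> s t' w = s t' w'"
  shows "stop_value_from n s t w = stop_value_from n s t w'"
  using assms
proof (induction "n - t" arbitrary: t)
  case 0
  then show ?case by (simp add: stop_value_from_beyond)
next
  case (Suc k)
  then have "t < n" by simp
  with Suc show ?case by (simp add: stop_value_from_step)
qed

lemma online_rule_sets: "online_rule n \<Omega> s \<Longrightarrow> t < n \<Longrightarrow> {w \<in> space \<Omega>. s t w} \<in> sets \<Omega>"
  unfolding online_rule_def by blast

lemma online_rule_past:
  assumes "online_rule n \<Omega> s" and "t < n" and "\<And>i. i \<le> t \<Longrightarrow> w i = w' i"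
  shows "s t w = s t w'"
  using assms unfolding online_rule_def by blast

lemma y_future_nonneg: "0 \<le> y_future n t w"
  unfolding y_future_def by (rule Max_ge) auto

lemma y_future_last: "n \<le> Suc t \<Longrightarrow> y_future n t w = 0"
  unfolding y_future_def by simp

lemma y_future_step:
  assumes "Suc t < n"
  shows "y_future n t w = max (w (Suc t)) (y_future n (Suc t) w)"
proof -
  have "{Suc t..<n} = insert (Suc t) {Suc (Suc t)..<n}"
    using assms by auto
  then have "y_future n t w = Max (insert (w (Suc t)) (insert 0 (w ` {Suc (Suc t)..<n})))"
    unfolding y_future_def by (simp add: insert_commute)
  also have "\<dots> = max (w (Suc t)) (y_future n (Suc t) w)"
    unfolding y_future_def by (rule Max_insert) auto
  finally show ?thesis .
qed

lemma y_future_fun_upd: "j \<le> t \<Longrightarrow> y_future n t (w(j := y)) = y_future n t w"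
proof -
  assume "j \<le> t"
  then have "(w(j := y)) ` {Suc t..<n} = w ` {Suc t..<n}"
    by (intro image_cong) auto
  then show ?thesis
    unfolding y_future_def by simp
qed

section \<open>Independent boxes\<close>

locale box_product = product_prob_space M "{..<n}"
  for M :: "nat \<Rightarrow> real measure" and n :: nat +
  assumes sets_M: "\<And>i. i < n \<Longrightarrow> sets (M i) = sets borel"
begin

abbreviation P :: "(nat \<Rightarrow> real) measure" where
  "P \<equiv> PiM {..<n} M"

lemma measurable_M: "a \<in> borel_measurable borel \<Longrightarrow> i < n \<Longrightarrow> a \<in> borel_measurable (M i)"
  using measurable_cong_sets[OF sets_M[symmetric] refl] by auto

lemma measurable_component_comp:
  "a \<in> borel_measurable borel \<Longrightarrow> i < n \<Longrightarrow> (\<lambda>w. a (w i)) \<in> borel_measurable P"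
  by (rule measurable_compose[OF measurable_component_singleton[of i "{..<n}" M] measurable_M]) auto

lemma nn_integral_PiM_split_coordinate:
  assumes t: "t < n" and f: "f \<in> borel_measurable P"
  shows "integral\<^sup>N P f = (\<integral>\<^sup>+y. (\<integral>\<^sup>+x. f (x(t := y)) \<partial>PiM ({..<n} - {t}) M) \<partial>M t)"
proof -
  have "{..<n} = insert t ({..<n} - {t})"
    using t by auto
  with f show ?thesis
    by (metis Diff_iff insertI1 product_nn_integral_insert_rev finite_Diff finite_lessThan)
qed

lemma nn_integral_PiM_independent_coordinate:
  assumes t: "t < n" and b: "b \<in> borel_measurable P"
    and b_inv: "\<And>w y. b (w(t := y)) = b w"
    and g: "(\<lambda>p. g (fst p) (snd p)) \<in> borel_measurable (borel \<Otimes>\<^sub>M borel)"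
  shows "(\<integral>\<^sup>+w. g (w t) (b w) \<partial>P) = (\<integral>\<^sup>+y. (\<integral>\<^sup>+w. g y (b w) \<partial>P) \<partial>M t)"
proof -
  let ?Q = "PiM ({..<n} - {t}) M"
  interpret Q: prob_space ?Q
    by (simp add: prob_space_PiM M.prob_space_axioms)
  define c where "c x = b (x(t := 0))" for x
  have bc: "b (x(t := y)) = c x" for x y
    using b_inv[of "x(t := 0)" y] by (simp add: c_def)
  have gm: "(\<lambda>w. g y (b w)) \<in> borel_measurable P" for y
    using measurable_compose[OF measurable_Pair[OF measurable_const b] g] by simp
  have gtm: "(\<lambda>w. g (w t) (b w)) \<in> borel_measurable P"
    using measurable_compose[OF measurable_Pair[OF measurable_component_comp[OF _ t] b] g] by simp
  have inner: "(\<integral>\<^sup>+x. g y (c x) \<partial>?Q) = (\<integral>\<^sup>+w. g y (b w) \<partial>P)" for y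
    using nn_integral_PiM_split_coordinate[OF t gm]
    by (simp add: bc M.emeasure_space_1 cong: nn_integral_cong)
  have "(\<integral>\<^sup>+w. g (w t) (b w) \<partial>P) = (\<integral>\<^sup>+y. (\<integral>\<^sup>+x. g y (c x) \<partial>?Q) \<partial>M t)"
    using nn_integral_PiM_split_coordinate[OF t gtm] by (simp add: bc cong: nn_integral_cong)
  also have "\<dots> = (\<integral>\<^sup>+y. (\<integral>\<^sup>+w. g y (b w) \<partial>P) \<partial>M t)"
    by (simp only: inner)
  finally show ?thesis .
qed

lemma nn_integral_PiM_mult_independent:
  assumes t: "t < n" and a: "a \<in> borel_measurable borel" and b: "b \<in> borel_measurable P"
    and b_inv: "\<And>w y. b (w(t := y)) = b w"
  shows "(\<integral>\<^sup>+w. a (w t) * b w \<partial>P) = (\<integral>\<^sup>+x. a x \<partial>M t) * (\<integral>\<^sup>+w. b w \<partial>P)"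
proof -
  have g: "(\<lambda>p. a (fst p) * snd p) \<in> borel_measurable (borel \<Otimes>\<^sub>M borel)"
    using a by measurable
  have "(\<integral>\<^sup>+w. a (w t) * b w \<partial>P) = (\<integral>\<^sup>+y. (\<integral>\<^sup>+w. a y * b w \<partial>P) \<partial>M t)"
    by (rule nn_integral_PiM_independent_coordinate[where b=b and g="\<lambda>y z. a y * z", OF t b b_inv g])
  also have "\<dots> = (\<integral>\<^sup>+y. a y * (\<integral>\<^sup>+w. b w \<partial>P) \<partial>M t)"
    by (rule nn_integral_cong) (rule nn_integral_cmult[OF b])
  also have "\<dots> = (\<integral>\<^sup>+x. a x \<partial>M t) * (\<integral>\<^sup>+w. b w \<partial>P)"
    by (rule nn_integral_multc[OF measurable_M[OF a t]])
  finally show ?thesis .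
qed

lemma nn_integral_PiM_max_independent:
  assumes t: "t < n" and b: "b \<in> borel_measurable P"
    and b_inv: "\<And>w y. b (w(t := y)) = b w"
  shows "(\<integral>\<^sup>+x. max (ennreal x) (\<integral>\<^sup>+w. b w \<partial>P) \<partial>M t) \<le> (\<integral>\<^sup>+w. max (ennreal (w t)) (b w) \<partial>P)"
proof -
  have g: "(\<lambda>p. max (ennreal (fst p)) (snd p)) \<in> borel_measurable (borel \<Otimes>\<^sub>M borel)"
    by measurable
  have "max (ennreal y) (\<integral>\<^sup>+w. b w \<partial>P) \<le> (\<integral>\<^sup>+w. max (ennreal y) (b w) \<partial>P)" for y
  proof -
    have "ennreal y \<le> (\<integral>\<^sup>+w. max (ennreal y) (b w) \<partial>P)"
      using nn_integral_mono[of P "\<lambda>_. ennreal y"] by (simp add: P.emeasure_space_1)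
    then show ?thesis
      by (simp add: nn_integral_mono)
  qed
  then have "(\<integral>\<^sup>+x. max (ennreal x) (\<integral>\<^sup>+w. b w \<partial>P) \<partial>M t)
      \<le> (\<integral>\<^sup>+y. (\<integral>\<^sup>+w. max (ennreal y) (b w) \<partial>P) \<partial>M t)"
    by (rule nn_integral_mono)
  also have "\<dots> = (\<integral>\<^sup>+w. max (ennreal (w t)) (b w) \<partial>P)"
    using nn_integral_PiM_independent_coordinate[where b=b and g="\<lambda>y z. max (ennreal y) z", OF t b b_inv g]
    by simp
  finally show ?thesis .
qed

section \<open>The Bellman bound on order-aware algorithms\<close>

lemma measurable_stop_value_from:
  assumes s: "online_rule n P s" and "t \<le> n"
  shows "(\<lambda>w. ennreal (stop_value_from n s t w)) \<in> borel_measurable P"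
  using assms(2)
proof (induction "n - t" arbitrary: t)
  case 0
  then show ?case by (simp add: stop_value_from_beyond)
next
  case (Suc k)
  then have t: "t < n" by simp
  have "{w \<in> space P. s t w} \<in> sets P"
    by (rule online_rule_sets[OF s t])
  moreover have "(\<lambda>w. ennreal (w t)) \<in> borel_measurable P"
    by (rule measurable_component_comp[OF _ t]) simp
  moreover have "(\<lambda>w. ennreal (stop_value_from n s (Suc t) w)) \<in> borel_measurable P"
    using Suc t by simp
  ultimately show ?case
    by (simp add: stop_value_from_step[OF t] if_distrib[of ennreal] measurable_If)
qed

function opt_value :: "nat \<Rightarrow> ennreal" where
  "opt_value t = (if t < n then \<integral>\<^sup>+x. max (ennreal x) (opt_value (Suc t)) \<partial>M t else 0)"
  by auto
termination
  by (relation "Wellfounded.measure (\<lambda>t. n - t)") auto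

declare opt_value.simps [simp del]

lemma opt_value_beyond: "n \<le> t \<Longrightarrow> opt_value t = 0"
  by (subst opt_value.simps) simp

lemma opt_value_step: "t < n \<Longrightarrow> opt_value t = (\<integral>\<^sup>+x. max (ennreal x) (opt_value (Suc t)) \<partial>M t)"
  by (subst opt_value.simps) simp

lemma nn_integral_stop_value_from_step:
  assumes s: "online_rule n P s" and t: "t < n" and h: "h \<in> borel_measurable P"
  shows "(\<integral>\<^sup>+w. h w * ennreal (stop_value_from n s t w) \<partial>P)
    = (\<integral>\<^sup>+w. (if s t w then h w * ennreal (w t) else 0) \<partial>P)
      + (\<integral>\<^sup>+w. (if s t w then 0 else h w) * ennreal (stop_value_from n s (Suc t) w) \<partial>P)"
proof -
  have S: "{w \<in> space P. s t w} \<in> sets P"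
    by (rule online_rule_sets[OF s t])
  have "(\<lambda>w. if s t w then h w * ennreal (w t) else 0) \<in> borel_measurable P"
    using h S measurable_component_comp[OF _ t, of ennreal] by (intro measurable_If) auto
  moreover have "(\<lambda>w. (if s t w then 0 else h w) * ennreal (stop_value_from n s (Suc t) w)) \<in> borel_measurable P"
    using h S measurable_stop_value_from[OF s, of "Suc t"] t by (intro borel_measurable_times_ennreal measurable_If) auto
  ultimately show ?thesis
    by (subst nn_integral_add[symmetric]) (auto intro!: nn_integral_cong simp: stop_value_from_step[OF t])
qed

text \<open>The weight \<open>h\<close>, which only sees the steps before \<open>t\<close>, lets the induction restrict to the
  event of rejecting at step \<open>t\<close>.\<close>
lemma nn_integral_weighted_stop_value_le:
  assumes s: "online_rule n P s" and "t \<le> n" and "h \<in> borel_measurable P"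
    and "\<And>w w'. (\<And>i. i < t \<Longrightarrow> w i = w' i) \<Longrightarrow> h w = h w'"
  shows "(\<integral>\<^sup>+w. h w * ennreal (stop_value_from n s t w) \<partial>P) \<le> opt_value t * (\<integral>\<^sup>+w. h w \<partial>P)"
  using assms(2-)
proof (induction "n - t" arbitrary: t h)
  case 0
  from "0.hyps" "0.prems"(1) have "t = n" by simp
  then show ?case by (simp add: stop_value_from_beyond)
next
  case (Suc k t h)
  from Suc.hyps(2) have t: "t < n" by simp
  define h' where "h' w = (if s t w then 0 else h w)" for w
  define g where "g w = (if s t w then h w * ennreal (w t) else 0)" for w
  have h': "h' \<in> borel_measurable P"
    unfolding h'_def using Suc.prems(2) online_rule_sets[OF s t] by (intro measurable_If) auto
  have h'_past: "h' w = h' w'" if "\<And>i. i < Suc t \<Longrightarrow> w i = w' i" for w w'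
  proof -
    have "h w = h w'"
      by (rule Suc.prems(3)) (simp add: that)
    then show ?thesis
      unfolding h'_def using online_rule_past[OF s t, of w w'] that by simp
  qed
  have IH: "(\<integral>\<^sup>+w. h' w * ennreal (stop_value_from n s (Suc t) w) \<partial>P)
      \<le> opt_value (Suc t) * (\<integral>\<^sup>+w. h' w \<partial>P)"
    using Suc.hyps(2) t by (intro Suc.hyps(1) h' h'_past) auto
  have h_inv: "h (w(t := y)) = h w" for w y
    by (rule Suc.prems(3)) simp
  have step: "g w + opt_value (Suc t) * h' w \<le> max (ennreal (w t)) (opt_value (Suc t)) * h w" for w
    by (cases "s t w") (simp_all add: g_def h'_def mult.commute[of "h w"] mult_right_mono)
  have "(\<integral>\<^sup>+w. h w * ennreal (stop_value_from n s t w) \<partial>P)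
      = (\<integral>\<^sup>+w. g w \<partial>P) + (\<integral>\<^sup>+w. h' w * ennreal (stop_value_from n s (Suc t) w) \<partial>P)"
    unfolding g_def h'_def by (rule nn_integral_stop_value_from_step[OF s t Suc.prems(2)])
  also have "\<dots> \<le> (\<integral>\<^sup>+w. g w \<partial>P) + opt_value (Suc t) * (\<integral>\<^sup>+w. h' w \<partial>P)"
    using IH by (rule add_left_mono)
  also have "\<dots> = (\<integral>\<^sup>+w. g w + opt_value (Suc t) * h' w \<partial>P)"
    using h' Suc.prems(2) online_rule_sets[OF s t] measurable_component_comp[OF _ t, of ennreal]
    by (simp add: g_def nn_integral_add nn_integral_cmult measurable_If)
  also have "\<dots> \<le> (\<integral>\<^sup>+w. max (ennreal (w t)) (opt_value (Suc t)) * h w \<partial>P)"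
    using step by (rule nn_integral_mono)
  also have "\<dots> = (\<integral>\<^sup>+x. max (ennreal x) (opt_value (Suc t)) \<partial>M t) * (\<integral>\<^sup>+w. h w \<partial>P)"
    by (rule nn_integral_PiM_mult_independent[where b=h, OF t _ Suc.prems(2) h_inv]) simp
  also have "\<dots> = opt_value t * (\<integral>\<^sup>+w. h w \<partial>P)"
    by (simp add: opt_value_step[OF t])
  finally show ?case .
qed

lemma expected_value_le_opt_value:
  assumes "online_rule n P s"
  shows "expected_value n P s \<le> opt_value 0"
  using nn_integral_weighted_stop_value_le[OF assms, of 0 "\<lambda>_. 1"]
  by (simp add: expected_value_def stop_value_eq_stop_value_from P.emeasure_space_1)

end

section \<open>The golden-ratio thresholds\<close>

locale prophet_boxes = box_product +
  assumes nonneg_M: "\<And>i. i < n \<Longrightarrow> AE x in M i. 0 \<le> x"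
    and integrable_M: "\<And>i. i < n \<Longrightarrow> integrable (M i) (\<lambda>x. x)"
begin

lemma integral_component:
  fixes f :: "real \<Rightarrow> real"
  assumes i: "i < n" and f: "f \<in> borel_measurable borel"
  shows "(\<integral>w. f (w i) \<partial>P) = (\<integral>x. f x \<partial>M i)"
proof -
  have "(\<integral>x. f x \<partial>M i) = (\<integral>x. f x \<partial>distr P (M i) (\<lambda>w. w i))"
    using PiM_component[of i] i by simp
  also have "\<dots> = (\<integral>w. f (w i) \<partial>P)"
    using i by (intro integral_distr measurable_M[OF f i] measurable_component_singleton) auto
  finally show ?thesis ..
qed

lemma integrable_component:
  assumes i: "i < n"
  shows "integrable P (\<lambda>w. w i)"
proof -
  have "integrable (distr P (M i) (\<lambda>w. w i)) (\<lambda>x. x)"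
    using integrable_M[OF i] PiM_component[of i] i by simp
  then show ?thesis
    using i by (subst (asm) integrable_distr_eq)
      (auto intro: measurable_M measurable_component_singleton)
qed

lemma integrable_cutoff:
  assumes "t < n"
  shows "integrable (M t) (\<lambda>x. if a \<le> x then x else c)"
proof (rule Bochner_Integration.integrable_bound)
  show "integrable (M t) (\<lambda>x. \<bar>x\<bar> + \<bar>c\<bar>)"
    using integrable_M[OF assms] by simp
  show "(\<lambda>x. if a \<le> x then x else c) \<in> borel_measurable (M t)"
    by (rule measurable_M[OF _ assms]) simp
  show "AE x in M t. norm (if a \<le> x then x else c) \<le> norm (\<bar>x\<bar> + \<bar>c\<bar>)"
    by (intro AE_I2) auto
qed

lemma integrable_y_future: "integrable P (y_future n t)"
proof (induction "n - Suc t" arbitrary: t)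
  case 0
  then have "y_future n t = (\<lambda>w. 0)"
    by (intro ext y_future_last) simp
  then show ?case by simp
next
  case (Suc k)
  then have "Suc t < n" by simp
  with Suc have "integrable P (\<lambda>w. max (w (Suc t)) (y_future n (Suc t) w))"
    by (intro integrable_max integrable_component) auto
  moreover have "y_future n t = (\<lambda>w. max (w (Suc t)) (y_future n (Suc t) w))"
    using \<open>Suc t < n\<close> by (simp add: y_future_step fun_eq_iff)
  ultimately show ?case
    by simp
qed

definition future_mean :: "nat \<Rightarrow> real" where
  "future_mean t = (\<integral>w. y_future n t w \<partial>P)"

definition beta :: "nat \<Rightarrow> real" where
  "beta t = (THE x. 0 \<le> x \<and> expected_excess P (y_future n t) (golden * x) = x)"

definition threshold :: "nat \<Rightarrow> real" where
  "threshold t = max ((1 / golden) * future_mean t) (beta t)"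

definition alg_rule :: "nat \<Rightarrow> (nat \<Rightarrow> real) \<Rightarrow> bool" where
  "alg_rule t w \<longleftrightarrow> threshold t \<le> w t"

definition alg_value :: "nat \<Rightarrow> ennreal" where
  "alg_value t = (\<integral>\<^sup>+w. ennreal (stop_value_from n alg_rule t w) \<partial>P)"

lemma beta_fixpoint:
  shows beta_nonneg: "0 \<le> beta t"
    and "expected_excess P (y_future n t) (golden * beta t) = beta t"
  using theI'[OF P.ex1_expected_excess_fixpoint[OF integrable_y_future y_future_nonneg less_imp_le[OF golden_pos]]]
  unfolding beta_def by auto

lemma beta_le:
  assumes "expected_excess P (y_future n t) (golden * z) \<le> z"
  shows "beta t \<le> z"
  using P.expected_excess_fixpoint_le[OF integrable_y_future less_imp_le[OF golden_pos] beta_fixpoint(2) assms] .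

lemma threshold_le_golden_beta: "threshold t \<le> golden * beta t"
proof -
  have "future_mean t - golden * beta t \<le> beta t"
    using P.expected_excess_ge[OF integrable_y_future, of t "golden * beta t"]
    unfolding future_mean_def beta_fixpoint(2) .
  moreover have "golden * (golden * beta t) = beta t + golden * beta t"
    by (subst mult.assoc[symmetric], subst golden_square) (simp add: algebra_simps)
  ultimately have "(1 / golden) * future_mean t \<le> golden * beta t"
    using golden_pos by (simp add: field_simps)
  moreover have "beta t \<le> golden * beta t"
    using golden_ge_1 beta_nonneg[of t] by (simp add: mult_le_cancel_right1)
  ultimately show ?thesis
    unfolding threshold_def by simp
qed

lemma future_mean_le_golden_threshold: "future_mean t \<le> golden * threshold t"
proof -
  have "future_mean t = golden * ((1 / golden) * future_mean t)"
    using golden_pos by simp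
  also have "\<dots> \<le> golden * threshold t"
    unfolding threshold_def using golden_pos by (intro mult_left_mono) auto
  finally show ?thesis .
qed

lemma opt_value_le_future_mean: "t < n \<Longrightarrow> opt_value (Suc t) \<le> ennreal (future_mean t)"
proof (induction "n - Suc t" arbitrary: t)
  case 0
  then show ?case by (simp add: opt_value_beyond)
next
  case (Suc k)
  then have s: "Suc t < n" by simp
  have mean: "ennreal (future_mean u) = (\<integral>\<^sup>+w. ennreal (y_future n u w) \<partial>P)" for u
    unfolding future_mean_def
    by (rule nn_integral_eq_integral[symmetric]) (auto simp: integrable_y_future y_future_nonneg)
  have y: "(\<lambda>w. ennreal (y_future n (Suc t) w)) \<in> borel_measurable P"
    using borel_measurable_integrable[OF integrable_y_future] by measurable
  have "opt_value (Suc t) = (\<integral>\<^sup>+x. max (ennreal x) (opt_value (Suc (Suc t))) \<partial>M (Suc t))"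
    by (rule opt_value_step[OF s])
  also have "\<dots> \<le> (\<integral>\<^sup>+x. max (ennreal x) (\<integral>\<^sup>+w. ennreal (y_future n (Suc t) w) \<partial>P) \<partial>M (Suc t))"
    using Suc.hyps(1)[of "Suc t"] Suc.hyps(2) s unfolding mean
    by (intro nn_integral_mono max.mono) auto
  also have "\<dots> \<le> (\<integral>\<^sup>+w. max (ennreal (w (Suc t))) (ennreal (y_future n (Suc t) w)) \<partial>P)"
    by (rule nn_integral_PiM_max_independent[OF s y]) (simp add: y_future_fun_upd)
  also have "\<dots> = ennreal (future_mean t)"
    unfolding mean by (intro nn_integral_cong) (simp add: y_future_step[OF s] ennreal_max)
  finally show ?case .
qed

lemma online_rule_alg_rule: "online_rule n P alg_rule"
  unfolding online_rule_def
proof (intro allI impI)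
  fix t assume t: "t < n"
  have "(\<lambda>w. w t) \<in> borel_measurable P"
    by (rule measurable_component_comp[OF _ t]) simp
  then have "{w \<in> space P. alg_rule t w} \<in> sets P"
    unfolding alg_rule_def borel_measurable_iff_ge by blast
  then show "(\<forall>w w'. (\<forall>i\<le>t. w i = w' i) \<longrightarrow> alg_rule t w = alg_rule t w')
      \<and> {w \<in> space P. alg_rule t w} \<in> sets P"
    unfolding alg_rule_def by auto
qed

lemma alg_value_step:
  assumes t: "t < n"
  shows "alg_value t = (\<integral>\<^sup>+x. (if threshold t \<le> x then ennreal x else alg_value (Suc t)) \<partial>M t)"
proof -
  define accept where "accept x = (if threshold t \<le> x then ennreal x else 0)" for x
  define reject where "reject x = (if threshold t \<le> x then 0 else (1 :: ennreal))" for x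
  have accept: "accept \<in> borel_measurable borel" and reject: "reject \<in> borel_measurable borel"
    unfolding accept_def reject_def by measurable
  have later: "(\<lambda>w. ennreal (stop_value_from n alg_rule (Suc t) w)) \<in> borel_measurable P"
    using measurable_stop_value_from[OF online_rule_alg_rule, of "Suc t"] t by simp
  have later_inv: "stop_value_from n alg_rule (Suc t) (w(t := y)) = stop_value_from n alg_rule (Suc t) w" for w y
    by (rule stop_value_from_cong) (simp add: alg_rule_def)
  have "alg_value t = (\<integral>\<^sup>+w. accept (w t) * 1 + reject (w t) * ennreal (stop_value_from n alg_rule (Suc t) w) \<partial>P)"
    unfolding alg_value_def
    by (intro nn_integral_cong) (simp add: stop_value_from_step[OF t] alg_rule_def accept_def reject_def)
  also have "\<dots> = (\<integral>\<^sup>+w. accept (w t) * 1 \<partial>P) + (\<integral>\<^sup>+w. reject (w t) * ennreal (stop_value_from n alg_rule (Suc t) w) \<partial>P)"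
    using measurable_component_comp[OF accept t] measurable_component_comp[OF reject t] later
    by (intro nn_integral_add) auto
  also have "\<dots> = (\<integral>\<^sup>+x. accept x \<partial>M t) + (\<integral>\<^sup>+x. reject x \<partial>M t) * alg_value (Suc t)"
    unfolding alg_value_def
    using nn_integral_PiM_mult_independent[OF t accept, of "\<lambda>_. 1"]
      nn_integral_PiM_mult_independent[OF t reject later] later_inv
    by (simp add: P.emeasure_space_1)
  also have "\<dots> = (\<integral>\<^sup>+x. accept x + reject x * alg_value (Suc t) \<partial>M t)"
    using measurable_M[OF accept t] measurable_M[OF reject t]
    by (simp add: nn_integral_add nn_integral_multc)
  also have "\<dots> = (\<integral>\<^sup>+x. (if threshold t \<le> x then ennreal x else alg_value (Suc t)) \<partial>M t)"
    by (intro nn_integral_cong) (simp add: accept_def reject_def)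
  finally show ?thesis .
qed

lemma expected_excess_y_future_le:
  assumes "Suc t < n"
  shows "expected_excess P (y_future n t) k
    \<le> expected_excess P (\<lambda>w. w (Suc t)) k + expected_excess P (y_future n (Suc t)) k"
proof -
  have "y_future n t = (\<lambda>w. max (w (Suc t)) (y_future n (Suc t) w))"
    using y_future_step[OF assms] by (simp add: fun_eq_iff)
  then show ?thesis
    using P.expected_excess_max_le[OF integrable_component[OF assms] integrable_y_future] by simp
qed

lemma expected_excess_component_le:
  assumes s: "s < n" and "b \<le> a" and "a \<le> k"
  shows "expected_excess P (\<lambda>w. w s) k \<le> (\<integral>x. (if a \<le> x then x else b) \<partial>M s) - b"
proof -
  have "expected_excess P (\<lambda>w. w s) k = (\<integral>x. max 0 (x - k) \<partial>M s)"
    unfolding expected_excess_def by (rule integral_component[OF s]) simp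
  also have "\<dots> \<le> (\<integral>x. (if a \<le> x then x else b) - b \<partial>M s)"
  proof (rule integral_mono)
    show "integrable (M s) (\<lambda>x. max 0 (x - k))"
      using M.integrable_excess[OF integrable_M[OF s]] .
    show "integrable (M s) (\<lambda>x. (if a \<le> x then x else b) - b)"
      using integrable_cutoff[OF s] by simp
    show "max 0 (x - k) \<le> (if a \<le> x then x else b) - b" for x
      using assms by simp
  qed
  also have "\<dots> = (\<integral>x. (if a \<le> x then x else b) \<partial>M s) - b"
    using integrable_cutoff[OF s] by (simp add: M.prob_space)
  finally show ?thesis .
qed

text \<open>With \<open>X\<close> the right-hand side and \<open>k = \<phi> X\<close>, the excess of \<open>y t\<close> over \<open>k\<close> is at most
  that of \<open>v (t+1)\<close>, which is \<open>\<le> X - \<beta> (t+1)\<close> because \<open>k \<ge> \<tau> (t+1)\<close>, plus that of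
  \<open>y (t+1)\<close>, which is \<open>\<le> \<beta> (t+1)\<close> because \<open>k \<ge> \<phi> \<beta> (t+1)\<close>.\<close>
lemma beta_le_step_payoff:
  assumes "Suc t < n"
  shows "beta t \<le> (\<integral>x. (if threshold (Suc t) \<le> x then x else beta (Suc t)) \<partial>M (Suc t))"
proof -
  define s where "s = Suc t"
  define b where "b = beta s"
  define f where "f x = (if threshold s \<le> x then x else b)" for x
  define X where "X = (\<integral>x. f x \<partial>M s)"
  define k where "k = golden * X"
  have s: "s < n"
    using assms by (simp add: s_def)
  have "b \<le> threshold s"
    unfolding b_def threshold_def by (rule max.cobounded2)
  have f_int: "integrable (M s) f"
    unfolding f_def by (rule integrable_cutoff[OF s])
  have "b \<le> X"
  proof -
    have "(\<integral>x. b \<partial>M s) \<le> X"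
      unfolding X_def using f_int \<open>b \<le> threshold s\<close> by (intro integral_mono) (auto simp: f_def)
    then show ?thesis
      by (simp add: M.prob_space)
  qed
  then have "golden * b \<le> k"
    unfolding k_def using golden_pos by simp
  then have "threshold s \<le> k"
    using threshold_le_golden_beta[of s] unfolding b_def by linarith
  have "expected_excess P (y_future n t) k
      \<le> expected_excess P (\<lambda>w. w s) k + expected_excess P (y_future n s) k"
    using expected_excess_y_future_le[OF assms] unfolding s_def .
  also have "expected_excess P (\<lambda>w. w s) k \<le> X - b"
    unfolding X_def f_def using expected_excess_component_le[OF s] \<open>b \<le> threshold s\<close> \<open>threshold s \<le> k\<close> .
  also have "expected_excess P (y_future n s) k \<le> expected_excess P (y_future n s) (golden * b)"
    using \<open>golden * b \<le> k\<close> by (rule P.expected_excess_antimono[OF integrable_y_future])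
  also have "\<dots> = b"
    unfolding b_def by (rule beta_fixpoint(2))
  finally have "beta t \<le> X"
    by (intro beta_le) (simp add: k_def)
  then show ?thesis
    unfolding X_def f_def b_def s_def .
qed

lemma beta_le_alg_value: "t < n \<Longrightarrow> ennreal (beta t) \<le> alg_value (Suc t)"
proof (induction "n - Suc t" arbitrary: t)
  case 0
  then have "y_future n t = (\<lambda>w. 0)"
    by (intro ext y_future_last) simp
  then have "beta t \<le> 0"
    by (intro beta_le) (simp add: expected_excess_def)
  then show ?case
    using beta_nonneg[of t] by simp
next
  case (Suc k)
  then have s: "Suc t < n" by simp
  have IH: "ennreal (beta (Suc t)) \<le> alg_value (Suc (Suc t))"
    using Suc.hyps(1)[of "Suc t"] Suc.hyps(2) s by simp
  let ?f = "\<lambda>x. if threshold (Suc t) \<le> x then x else beta (Suc t)"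
  have f_int: "integrable (M (Suc t)) ?f"
    by (rule integrable_cutoff[OF s])
  have "ennreal (beta t) \<le> ennreal (\<integral>x. ?f x \<partial>M (Suc t))"
    using beta_le_step_payoff[OF s] by (rule ennreal_leI)
  also have "\<dots> = (\<integral>\<^sup>+x. ennreal (?f x) \<partial>M (Suc t))"
  proof (rule nn_integral_eq_integral[symmetric, OF f_int], rule AE_I2)
    show "0 \<le> ?f x" for x
      using beta_nonneg[of "Suc t"] max.cobounded2[of "(1 / golden) * future_mean (Suc t)" "beta (Suc t)"]
      unfolding threshold_def by auto
  qed
  also have "\<dots> \<le> (\<integral>\<^sup>+x. (if threshold (Suc t) \<le> x then ennreal x else alg_value (Suc (Suc t))) \<partial>M (Suc t))"
    using IH by (intro nn_integral_mono) (simp add: ennreal_leI)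
  also have "\<dots> = alg_value (Suc t)"
    by (rule alg_value_step[OF s, symmetric])
  finally show ?case .
qed

lemma max_opt_value_le_golden_payoff:
  assumes t: "t < n" and x: "0 \<le> x"
    and IH: "opt_value (Suc t) \<le> ennreal golden * alg_value (Suc t)"
  shows "max (ennreal x) (opt_value (Suc t))
    \<le> ennreal golden * (if threshold t \<le> x then ennreal x else alg_value (Suc t))"
proof (cases "threshold t \<le> x")
  case True
  have "future_mean t \<le> golden * x"
    using future_mean_le_golden_threshold[of t] mult_left_mono[OF True, of golden] golden_pos
    by linarith
  then have "opt_value (Suc t) \<le> ennreal (golden * x)"
    by (rule order_trans[OF opt_value_le_future_mean[OF t] ennreal_leI])
  moreover have "ennreal x \<le> ennreal (golden * x)"
    using golden_ge_1 x by (intro ennreal_leI) (simp add: mult_le_cancel_right1)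
  ultimately have "max (ennreal x) (opt_value (Suc t)) \<le> ennreal (golden * x)"
    by (rule max.boundedI[rotated])
  also have "\<dots> = ennreal golden * (if threshold t \<le> x then ennreal x else alg_value (Suc t))"
    using True golden_pos x by (simp add: ennreal_mult)
  finally show ?thesis .
next
  case False
  have "ennreal x \<le> ennreal (golden * beta t)"
    using False threshold_le_golden_beta[of t] by (intro ennreal_leI) simp
  also have "\<dots> \<le> ennreal golden * alg_value (Suc t)"
    using golden_pos beta_nonneg[of t] beta_le_alg_value[OF t]
    by (simp add: ennreal_mult mult_left_mono)
  finally show ?thesis
    using False IH by simp
qed

lemma opt_value_le_golden_alg_value: "t \<le> n \<Longrightarrow> opt_value t \<le> ennreal golden * alg_value t"
proof (induction "n - t" arbitrary: t)
  case 0
  then have "n \<le> t" by simp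
  then show ?case by (simp add: opt_value_beyond)
next
  case (Suc k)
  then have t: "t < n" by simp
  have IH: "opt_value (Suc t) \<le> ennreal golden * alg_value (Suc t)"
    using Suc.hyps(1)[of "Suc t"] Suc.hyps(2) t by simp
  have "opt_value t = (\<integral>\<^sup>+x. max (ennreal x) (opt_value (Suc t)) \<partial>M t)"
    by (rule opt_value_step[OF t])
  also have "\<dots> \<le> (\<integral>\<^sup>+x. ennreal golden * (if threshold t \<le> x then ennreal x else alg_value (Suc t)) \<partial>M t)"
  proof (rule nn_integral_mono_AE)
    show "AE x in M t. max (ennreal x) (opt_value (Suc t))
        \<le> ennreal golden * (if threshold t \<le> x then ennreal x else alg_value (Suc t))"
      using nonneg_M[OF t] by eventually_elim (rule max_opt_value_le_golden_payoff[OF t _ IH])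
  qed
  also have "\<dots> = ennreal golden * alg_value t"
    unfolding alg_value_step[OF t] by (rule nn_integral_cmult) (rule measurable_M[OF _ t], simp)
  finally show ?case .
qed

end

text \<open>\<open>product_prob_space\<close> needs a probability space at every index, hence the padding.\<close>
lemma prophet_boxes_arrival_order:
  assumes "\<And>i. i < n \<Longrightarrow> prob_space (F i)"
    and "\<And>i. i < n \<Longrightarrow> sets (F i) = sets borel"
    and "\<And>i. i < n \<Longrightarrow> AE x in F i. 0 \<le> x"
    and "\<And>i. i < n \<Longrightarrow> integrable (F i) (\<lambda>x. x)"
    and "bij_betw \<pi> {..<n} {..<n}"
  shows "prophet_boxes (\<lambda>i. if i < n then F (\<pi> i) else return borel 0) n"
proof -
  define M where "M i = (if i < n then F (\<pi> i) else return borel 0)" for i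
  have M: "i < n \<Longrightarrow> M i = F (\<pi> i)" and \<pi>: "i < n \<Longrightarrow> \<pi> i < n" for i
    using bij_betwE[OF assms(5)] by (auto simp: M_def)
  have prob: "prob_space (M i)" for i
    using assms(1) \<pi> by (auto simp: M_def intro: prob_space_return)
  have "sets (M i) = sets borel" "AE x in M i. 0 \<le> x" "integrable (M i) (\<lambda>x. x)" if "i < n" for i
    unfolding M[OF that] using assms(2-4)[OF \<pi>[OF that]] by simp_all
  with prob have "prophet_boxes M n"
    unfolding prophet_boxes_def prophet_boxes_axioms_def box_product_def box_product_axioms_def
      product_prob_space_def product_prob_space_axioms_def product_sigma_finite_def
    using prob_space_imp_sigma_finite[OF prob] by blast
  then show ?thesis
    unfolding M_def .
qed

theorem theorem3p1:
  fixes n :: nat and F :: "nat \<Rightarrow> real measure" and \<pi> :: "nat \<Rightarrow> nat"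
  assumes "\<And>i. i < n \<Longrightarrow> prob_space (F i)"
    and "\<And>i. i < n \<Longrightarrow> sets (F i) = sets borel"
    and "\<And>i. i < n \<Longrightarrow> AE x in F i. 0 \<le> x"
    and "\<And>i. i < n \<Longrightarrow> integrable (F i) (\<lambda>x. x)"
    and "bij_betw \<pi> {..<n} {..<n}"
  shows "ennreal (1 / golden) * OPT n F \<pi> \<le> ALG n F \<pi>"
proof -
  define M where "M i = (if i < n then F (\<pi> i) else return borel 0)" for i
  interpret prophet_boxes M n
    unfolding M_def by (rule prophet_boxes_arrival_order[OF assms])
  have arrival: "arrival_space n F \<pi> = P"
    unfolding arrival_space_def by (rule PiM_cong) (simp_all add: M_def)
  have "ALG_rule n F \<pi> = alg_rule"
    by (intro ext) (simp add: ALG_rule_def alpha_thr_def beta_thr_def alg_rule_def threshold_def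
        future_mean_def beta_def expected_excess_def arrival)
  then have ALG: "ALG n F \<pi> = alg_value 0"
    unfolding ALG_def expected_value_def alg_value_def arrival by (simp add: stop_value_eq_stop_value_from)
  have "OPT n F \<pi> \<le> opt_value 0"
    unfolding OPT_def arrival by (rule SUP_least) (simp add: expected_value_le_opt_value)
  also have "\<dots> \<le> ennreal golden * alg_value 0"
    by (rule opt_value_le_golden_alg_value) simp
  finally have "ennreal (1 / golden) * OPT n F \<pi> \<le> ennreal (1 / golden) * ennreal golden * alg_value 0"
    by (simp add: mult.assoc mult_left_mono)
  also have "ennreal (1 / golden) * ennreal golden = 1"
    using golden_pos by (simp add: ennreal_mult[symmetric])
  finally show ?thesis
    by (simp add: ALG)
qed

end
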